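(* Let $N\ge 2$ be an integer, let $T\ge 0$ be a real number, and let $\hat{\boldsymbol{A}}=(\hat A_1,\dots,\hat A_N)$, $\hat{\boldsymbol{B}}=(\hat B_1,\dots,\hat B_N)$ be vectors with $\hat A_i\ge 0$, $\hat B_i\ge 0$ for all $i$ and $\sum_{i=1}^N\hat A_i=\sum_{i=1}^N\hat B_i=T$. Put $\hat S_i=\hat A_i+\hat B_i$. Suppose $\hat S_i\le T$ for all $i=1,\dots,N$. Then $\hat L_{\min}=0$; that is, there exists an $N\times N$ real matrix $\hat{\boldsymbol{P}}=(\hat p_{i,j})$ with $\hat p_{i,i}=0$ for all $i$, $\hat p_{i,j}\ge 0$ for all $i,j$, $\sum_{i,j}\hat p_{i,j}=T$, such that $$\hat L=\sum_{i=1}^N\Big(\sum_{j=1}^N\hat p_{i,j}-\hat A_i\Big)^2+\sum_{j=1}^N\Big(\sum_{i=1}^N\hat p_{i,j}-\hat B_j\Big)^2=0,$$ i.e. $\sum_j\hat p_{i,j}=\hat A_i$ for all $i$ and $\sum_i\hat p_{i,j}=\hat B_j$ for all $j$.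
   Context: Here $\hat L_{\min}$ denotes the minimum of $\hat L$ over all $N\times N$ matrices $\hat{\boldsymbol P}$ with zero diagonal, nonnegative entries and total entry sum $T$. $T$ is called the total preference and $\hat S_i$ the popularity of arm $i$. *)

theory Defs
  imports Main Complex_Main
begin

definition Lhat :: "nat \<Rightarrow> (nat \<Rightarrow> real) \<Rightarrow> (nat \<Rightarrow> real) \<Rightarrow> (nat \<Rightarrow> nat \<Rightarrow> real) \<Rightarrow> real" where
  "Lhat N A B P =
     (\<Sum>i<N. ((\<Sum>j<N. P i j) - A i)^2) + (\<Sum>j<N. ((\<Sum>i<N. P i j) - B j)^2)"

end

theory Submission
  imports Defs
begin

text \<open>Cut \<open>[0, T]\<close> into consecutive intervals of lengths \<open>A i\<close> (the rows) and, after
  rotating the circle of length \<open>T\<close> by a shift \<open>s\<close>, into consecutive intervals of lengths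
  \<open>B j\<close> (the columns), and let \<open>P i j\<close> be the length of the intersection of row interval
  \<open>i\<close> with column interval \<open>j\<close>. Row and column sums are then \<open>A i\<close> and \<open>B j\<close>
  automatically. With \<open>a\<close>, \<open>b\<close> the partial sums of \<open>A\<close>, \<open>B\<close>, the diagonal vanishes
  as soon as \<open>a (i+1) \<le> s + b i\<close> and \<open>s + b (i+1) \<le> a i + T\<close>, i.e. column interval \<open>i\<close>
  starts after row interval \<open>i\<close> ends and ends before it comes round again; the hypothesis
  \<open>A i + B i \<le> T\<close> is exactly what puts every such lower bound on \<open>s\<close> below every such
  upper bound.\<close>

definition overlap :: "real \<Rightarrow> real \<Rightarrow> real \<Rightarrow> real \<Rightarrow> real" where
  "overlap x y u v = max 0 (min y v - max x u)"

lemma overlap_nonneg: "0 \<le> overlap x y u v"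
  unfolding overlap_def by simp

lemma overlap_commute: "overlap x y u v = overlap u v x y"
  unfolding overlap_def by (simp add: min.commute max.commute)

lemma overlap_split: "u \<le> v \<Longrightarrow> v \<le> w \<Longrightarrow> overlap x y u v + overlap x y v w = overlap x y u w"
  unfolding overlap_def by (simp add: max_def min_def)

lemma overlap_subinterval: "u \<le> x \<Longrightarrow> x \<le> y \<Longrightarrow> y \<le> v \<Longrightarrow> overlap x y u v = y - x"
  unfolding overlap_def by (simp add: max_def min_def)

lemma overlap_translate: "overlap (x + t) (y + t) u v = overlap x y (u - t) (v - t)"
  unfolding overlap_def by (simp add: max_def min_def)

lemma overlap_disjoint: "y \<le> u \<or> v \<le> x \<Longrightarrow> overlap x y u v = 0"
  unfolding overlap_def by (auto simp: max_def min_def)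

definition partial_sum :: "(nat \<Rightarrow> real) \<Rightarrow> nat \<Rightarrow> real" where
  "partial_sum f k = (\<Sum>m<k. f m)"

lemma partial_sum_0 [simp]: "partial_sum f 0 = 0"
  and partial_sum_Suc [simp]: "partial_sum f (Suc k) = partial_sum f k + f k"
  unfolding partial_sum_def by simp_all

lemma partial_sum_mono:
  assumes "\<And>m. m < n \<Longrightarrow> 0 \<le> f m" and "i \<le> k" and "k \<le> n"
  shows "partial_sum f i \<le> partial_sum f k"
  unfolding partial_sum_def using assms by (intro sum_mono2) auto

lemma partial_sum_bounds:
  assumes "\<And>m. m < n \<Longrightarrow> 0 \<le> f m" and "k \<le> n"
  shows "0 \<le> partial_sum f k" and "partial_sum f k \<le> partial_sum f n"
  using assms partial_sum_mono[of n f 0 k] partial_sum_mono[of n f k n] by simp_all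

lemma overlap_sum_partition:
  assumes "\<And>m. m < n \<Longrightarrow> 0 \<le> d m"
  shows "(\<Sum>j<n. overlap x y (u + partial_sum d j) (u + partial_sum d (Suc j)))
           = overlap x y u (u + partial_sum d n)"
  using assms
proof (induction n)
  case 0
  show ?case unfolding overlap_def by simp
next
  case (Suc n)
  have "0 \<le> partial_sum d n"
    using partial_sum_bounds(1)[of "Suc n" d n] Suc.prems by simp
  moreover have "0 \<le> d n"
    using Suc.prems by simp
  ultimately show ?case
    using Suc overlap_split[of u "u + partial_sum d n" "u + partial_sum d (Suc n)" x y] by simp
qed

text \<open>The column interval \<open>[u, v] \<subseteq> [0, 2T]\<close> is read modulo \<open>T\<close>: its part beyond \<open>T\<close>
  meets the row interval \<open>[x, y] \<subseteq> [0, T]\<close> in its translate \<open>[x + T, y + T]\<close>.\<close>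

definition rotated_coupling ::
    "real \<Rightarrow> real \<Rightarrow> (nat \<Rightarrow> real) \<Rightarrow> (nat \<Rightarrow> real) \<Rightarrow> nat \<Rightarrow> nat \<Rightarrow> real" where
  "rotated_coupling T s A B i j =
     (let x = partial_sum A i; y = partial_sum A (Suc i);
          u = s + partial_sum B j; v = s + partial_sum B (Suc j)
      in overlap x y u v + overlap (x + T) (y + T) u v)"

lemma rotated_coupling_nonneg: "0 \<le> rotated_coupling T s A B i j"
  unfolding rotated_coupling_def Let_def by (simp add: overlap_nonneg)

lemma rotated_coupling_diagonal:
  assumes "partial_sum A (Suc i) \<le> s + partial_sum B i"
    and "s + partial_sum B (Suc i) \<le> partial_sum A i + T"
  shows "rotated_coupling T s A B i i = 0"
  using assms unfolding rotated_coupling_def Let_def by (simp add: overlap_disjoint)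

context
  fixes N :: nat and T :: real and A B :: "nat \<Rightarrow> real"
  assumes A_nonneg: "\<And>i. i < N \<Longrightarrow> 0 \<le> A i" and B_nonneg: "\<And>i. i < N \<Longrightarrow> 0 \<le> B i"
    and sum_A: "partial_sum A N = T" and sum_B: "partial_sum B N = T"
begin

lemma partial_sum_A_bounds: "k \<le> N \<Longrightarrow> 0 \<le> partial_sum A k \<and> partial_sum A k \<le> T"
  using partial_sum_bounds[of N A k, OF A_nonneg] sum_A by simp

lemma partial_sum_B_bounds: "k \<le> N \<Longrightarrow> 0 \<le> partial_sum B k \<and> partial_sum B k \<le> T"
  using partial_sum_bounds[of N B k, OF B_nonneg] sum_B by simp

context
  fixes s :: real
  assumes shift_nonneg: "0 \<le> s" and shift_le: "s \<le> T"
begin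

lemma rotated_coupling_row_sum:
  assumes "i < N"
  shows "(\<Sum>j<N. rotated_coupling T s A B i j) = A i"
proof -
  define x where "x = partial_sum A i"
  define y where "y = partial_sum A (Suc i)"
  have xy: "0 \<le> x" "x \<le> y" "y \<le> T"
    using partial_sum_A_bounds[of i] partial_sum_A_bounds[of "Suc i"] A_nonneg[OF assms] assms
    unfolding x_def y_def by auto
  have "(\<Sum>j<N. overlap x y (s + partial_sum B j) (s + partial_sum B (Suc j)))
          = overlap x y s (s + T)"
    using overlap_sum_partition[of N B x y s, OF B_nonneg] sum_B by simp
  moreover have "(\<Sum>j<N. overlap (x + T) (y + T) (s + partial_sum B j) (s + partial_sum B (Suc j)))
          = overlap x y (s - T) s"
    using overlap_sum_partition[of N B x y "s - T", OF B_nonneg] sum_B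
    by (simp add: overlap_translate diff_add_eq)
  moreover have "overlap x y (s - T) s + overlap x y s (s + T) = y - x"
    using xy shift_nonneg shift_le by (simp add: overlap_split overlap_subinterval)
  ultimately show ?thesis
    unfolding rotated_coupling_def Let_def sum.distrib x_def y_def by simp
qed

lemma rotated_coupling_column_sum:
  assumes "j < N"
  shows "(\<Sum>i<N. rotated_coupling T s A B i j) = B j"
proof -
  define u where "u = s + partial_sum B j"
  define v where "v = s + partial_sum B (Suc j)"
  have uv: "0 \<le> u" "u \<le> v" "v \<le> T + T"
    using partial_sum_B_bounds[of j] partial_sum_B_bounds[of "Suc j"] B_nonneg[OF assms] assms
      shift_nonneg shift_le
    unfolding u_def v_def by auto
  have "(\<Sum>i<N. overlap (partial_sum A i) (partial_sum A (Suc i)) u v) = overlap 0 T u v"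
    using overlap_sum_partition[of N A u v 0, OF A_nonneg] sum_A by (simp add: overlap_commute)
  moreover have "(\<Sum>i<N. overlap (partial_sum A i + T) (partial_sum A (Suc i) + T) u v)
          = overlap T (T + T) u v"
    using overlap_sum_partition[of N A u v T, OF A_nonneg] sum_A
    by (simp add: overlap_commute add.commute)
  moreover have "overlap 0 T u v + overlap T (T + T) u v = v - u"
    using uv shift_le shift_nonneg
    by (simp add: overlap_commute[of _ _ u v] overlap_split overlap_subinterval)
  ultimately show ?thesis
    unfolding rotated_coupling_def Let_def sum.distrib u_def v_def by simp
qed

end

context
  assumes popularity: "\<And>i. i < N \<Longrightarrow> A i + B i \<le> T"
begin

lemma shift_bounds_compatible:
  assumes "k < N" and "i < N"
  shows "partial_sum A (Suc k) - partial_sum B k \<le> T + partial_sum A i - partial_sum B (Suc i)"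
proof (cases k i rule: linorder_cases)
  case less
  then show ?thesis
    using partial_sum_mono[of N A "Suc k" i, OF A_nonneg] partial_sum_B_bounds[of "Suc i"]
      partial_sum_B_bounds[of k] assms
    by simp
next
  case equal
  then show ?thesis
    using popularity[of i] assms by simp
next
  case greater
  then show ?thesis
    using partial_sum_mono[of N B "Suc i" k, OF B_nonneg] partial_sum_A_bounds[of "Suc k"]
      partial_sum_A_bounds[of i] assms
    by simp
qed

lemma diagonal_free_shift_exists:
  "\<exists>s. 0 \<le> s \<and> s \<le> T \<and> (\<forall>i<N. rotated_coupling T s A B i i = 0)"
proof -
  define lb where "lb k = partial_sum A (Suc k) - partial_sum B k" for k
  define s where "s = Max (insert 0 (lb ` {..<N}))"
  have "s \<in> insert 0 (lb ` {..<N})"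
    unfolding s_def by (intro Max_in) auto
  then consider (zero) "s = 0" | (attained) k where "k < N" "s = lb k"
    by auto
  note s_cases = this
  have above: "lb i \<le> s" if "i < N" for i
    unfolding s_def using that by (intro Max_ge) auto
  have "0 \<le> s"
    unfolding s_def by (intro Max_ge) auto
  moreover have "s \<le> T"
  proof (cases rule: s_cases)
    case (attained k)
    then show ?thesis
      using partial_sum_A_bounds[of "Suc k"] partial_sum_B_bounds[of k]
      unfolding lb_def by (simp del: partial_sum_Suc)
  qed (use partial_sum_A_bounds[of N] in simp)
  moreover have "s + partial_sum B (Suc i) \<le> partial_sum A i + T" if "i < N" for i
  proof (cases rule: s_cases)
    case zero
    then show ?thesis
      using partial_sum_A_bounds[of i] partial_sum_B_bounds[of "Suc i"] that by simp
  next
    case (attained k)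
    then show ?thesis
      using shift_bounds_compatible[OF attained(1) that] unfolding lb_def by simp
  qed
  moreover have "partial_sum A (Suc i) \<le> s + partial_sum B i" if "i < N" for i
    using above[OF that] unfolding lb_def by simp
  ultimately show ?thesis
    by (auto intro!: exI[of _ s] rotated_coupling_diagonal)
qed

end

end

theorem lemma2p1:
  fixes N :: nat and T :: real and A B :: "nat \<Rightarrow> real"
  assumes "N \<ge> 2" and "T \<ge> 0"
    and "\<And>i. i < N \<Longrightarrow> A i \<ge> 0" and "\<And>i. i < N \<Longrightarrow> B i \<ge> 0"
    and "(\<Sum>i<N. A i) = T" and "(\<Sum>i<N. B i) = T"
    and "\<And>i. i < N \<Longrightarrow> A i + B i \<le> T"
  shows "\<exists>P :: nat \<Rightarrow> nat \<Rightarrow> real.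
           (\<forall>i<N. P i i = 0) \<and> (\<forall>i<N. \<forall>j<N. P i j \<ge> 0) \<and>
           (\<Sum>i<N. \<Sum>j<N. P i j) = T \<and>
           Lhat N A B P = 0 \<and>
           (\<forall>i<N. (\<Sum>j<N. P i j) = A i) \<and> (\<forall>j<N. (\<Sum>i<N. P i j) = B j)"
proof -
  have sums: "partial_sum A N = T" "partial_sum B N = T"
    using assms(5,6) unfolding partial_sum_def by simp_all
  obtain s where s: "0 \<le> s" "s \<le> T"
    and diagonal: "\<forall>i<N. rotated_coupling T s A B i i = 0"
    using diagonal_free_shift_exists[OF assms(3,4) sums assms(7)] by blast
  define P where "P = rotated_coupling T s A B"
  have rows: "\<forall>i<N. (\<Sum>j<N. P i j) = A i"
    unfolding P_def using rotated_coupling_row_sum[OF assms(3,4) sums s] by blast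
  have columns: "\<forall>j<N. (\<Sum>i<N. P i j) = B j"
    unfolding P_def using rotated_coupling_column_sum[OF assms(3,4) sums s] by blast
  have "(\<Sum>i<N. \<Sum>j<N. P i j) = T"
    using rows assms(5) by simp
  moreover have "Lhat N A B P = 0"
    unfolding Lhat_def using rows columns by simp
  moreover have "\<forall>i<N. \<forall>j<N. P i j \<ge> 0"
    unfolding P_def by (simp add: rotated_coupling_nonneg)
  ultimately show ?thesis
    using rows columns diagonal unfolding P_def by blast
qed

end
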